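(* Let $\varphi$ be a closed block-labelled formula in disjunctive form, and let $f$ be a bijective renaming of propositional variables such that $f(X^k) = [\varphi[X^k]]^k$ for every $X^k \in \mathrm{bv}(\varphi)$. Then for every sub-formula $\psi$ of $\varphi$ and every set $E$ of states of $\mathrm{enc}(\varphi)$ such that $\{\varphi[Y^k] \mid Y^k \in \mathrm{fv}(\psi)\} \subseteq E$ and $E \cap \{\varphi[Y^k] \mid Y^k \in \mathrm{bv}(\psi)\} = \emptyset$, we have $\mathrm{dec}_s(\mathrm{enc}(\varphi), \psi, E) =_f \psi$.
   Context: An LTS is a tuple $(\Sigma, A, \to, s_0)$ with state set $\Sigma$, label set $A$, transition relation $\to\,\subseteq \Sigma\times A\times\Sigma$ (written $s \xrightarrow{a} s'$) and initial state $s_0$. Block-labelled formulas in disjunctive form are generated by $\varphi ::= \mathbf{ff} \mid \varphi_1 \lor \varphi_2 \mid \langle a\rangle\varphi_0 \mid \mu X^k.\varphi_0 \mid \neg\varphi_0 \mid X^k$, where $a$ ranges over action labels, $X$ over propositional variables and $k\in\mathbb{N}$ is a block number attached to every variable occurrence. $\mathrm{fv}(\varphi)$ and $\mathrm{bv}(\varphi)$ denote the free and bound variables; $\varphi$ is closed if $\mathrm{fv}(\varphi)=\emptyset$. All bound variables are assumed to have distinct names, and for $X^k\in\mathrm{bv}(\varphi)$, $\varphi[X^k]$ denotes the unique sub-formula of $\varphi$ of the form $\mu X^k.\varphi_0$. Encoding: $\mathrm{enc}(\varphi)$ is the LTS whose states are the sub-formulas of $\varphi$, with initial state $\varphi$,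 where $\mathbf{ff}$ has no outgoing transitions and the transitions are exactly: $X^k \xrightarrow{\lor} \varphi[X^k]$; $\neg\varphi_0 \xrightarrow{\neg} \varphi_0$; $\langle a\rangle\varphi_0 \xrightarrow{\langle a\rangle}\varphi_0$; $\varphi_1\lor\varphi_2 \xrightarrow{\lor}\varphi_1$ and $\varphi_1\lor\varphi_2\xrightarrow{\lor}\varphi_2$; $\mu X^k.\varphi_0 \xrightarrow{\mu^k}\varphi_0$. (Labels are the symbols $\lor$, $\neg$, $\langle a\rangle$, $\mu^k$.) Decoding: for an LTS $P$ with labels of the forms $\lor,\neg,\langle a\rangle,\mu^k$, a state $s$ and a set $E$ of states, $\mathrm{dec}_s(P,s,E) = \bigvee_{s\xrightarrow{\sigma}s' \in P}\mathrm{dec}_t(P, s\xrightarrow{\sigma}s', E)$ (a disjunction built with binary $\lor$ in some enumeration order of the outgoing transitions; the empty disjunction is $\mathbf{ff}$), where $\mathrm{dec}_t(P,s\xrightarrow{\lor}s',E)=\mathrm{dec}_s(P,s',E)$, $\mathrm{dec}_t(P,s\xrightarrow{\neg}s',E)=\neg\mathrm{dec}_s(P,s',E)$, $\mathrm{dec}_t(P,s\xrightarrow{\langle a\rangle}s',E)=\langle a\rangle\mathrm{dec}_s(P,s',E)$, and $\mathrm{dec}_t(P,s\xrightarrow{\mu^k}s',E)$ equals $[s]^k$ if $s\in E$ and $\mu [s]^k.\mathrm{dec}_s(P,s',E\cup\{s\})$ otherwise. Here $[s]^k$ denotes a propositional variable with block number $k$ uniquely determined by the pair $(s,k)$. Equality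 modulo renaming, commutativity and idempotence: for a bijection $f$ on propositional variables, $=_f$ is the smallest relation on formulas such that whenever $\varphi_i =_f \varphi_i'$ ($i\in\{0,1,2\}$): $\mathbf{ff}=_f\mathbf{ff}$, $\neg\varphi_0=_f\neg\varphi_0'$, $\langle a\rangle\varphi_0=_f\langle a\rangle\varphi_0'$, $\varphi_1\lor\varphi_2=_f\varphi_1'\lor\varphi_2'$, $X=_f f(X)$ and $\mu X.\varphi_0=_f\mu f(X).\varphi_0'$ for every variable $X$; $\varphi_1\lor\varphi_2 =_f \varphi_2'\lor\varphi_1'$; $\varphi_0\lor\varphi_0=_f\varphi_0'$ and $\varphi_0=_f\varphi_0'\lor\varphi_0'$. *)

theory Defs
  imports Main
begin

text \<open>Propositional variables X^k: a name together with a block number.\<close>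
type_synonym 'x pvar = "'x \<times> nat"

datatype ('a, 'x) fm =
    FF
  | Or "('a, 'x) fm" "('a, 'x) fm"
  | Dia 'a "('a, 'x) fm"
  | Mu "'x pvar" "('a, 'x) fm"
  | Neg "('a, 'x) fm"
  | Var "'x pvar"

fun fv :: "('a, 'x) fm \<Rightarrow> 'x pvar set" where
  "fv FF = {}"
| "fv (Or p q) = fv p \<union> fv q"
| "fv (Dia a p) = fv p"
| "fv (Mu X p) = fv p - {X}"
| "fv (Neg p) = fv p"
| "fv (Var X) = {X}"

fun bv :: "('a, 'x) fm \<Rightarrow> 'x pvar set" where
  "bv FF = {}"
| "bv (Or p q) = bv p \<union> bv q"
| "bv (Dia a p) = bv p"
| "bv (Mu X p) = insert X (bv p)"
| "bv (Neg p) = bv p"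
| "bv (Var X) = {}"

fun binders :: "('a, 'x) fm \<Rightarrow> 'x pvar list" where
  "binders FF = []"
| "binders (Or p q) = binders p @ binders q"
| "binders (Dia a p) = binders p"
| "binders (Mu X p) = X # binders p"
| "binders (Neg p) = binders p"
| "binders (Var X) = []"

definition closed :: "('a, 'x) fm \<Rightarrow> bool" where
  "closed p \<longleftrightarrow> fv p = {}"

definition distinct_bv :: "('a, 'x) fm \<Rightarrow> bool" where
  "distinct_bv p \<longleftrightarrow> distinct (binders p)"

fun subs :: "('a, 'x) fm \<Rightarrow> ('a, 'x) fm set" where
  "subs FF = {FF}"
| "subs (Or p q) = insert (Or p q) (subs p \<union> subs q)"
| "subs (Dia a p) = insert (Dia a p) (subs p)"
| "subs (Mu X p) = insert (Mu X p) (subs p)"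
| "subs (Neg p) = insert (Neg p) (subs p)"
| "subs (Var X) = {Var X}"

text \<open>phi[X^k]: the unique sub-formula of phi of the form mu X^k. phi0.\<close>
definition bnd :: "('a, 'x) fm \<Rightarrow> 'x pvar \<Rightarrow> ('a, 'x) fm" where
  "bnd \<phi> X = (THE \<psi>. \<psi> \<in> subs \<phi> \<and> (\<exists>\<psi>0. \<psi> = Mu X \<psi>0))"

datatype 'a lbl = LOr | LNeg | LDia 'a | LMu nat

record ('s, 'a) lts =
  states :: "'s set"
  labels :: "'a lbl set"
  trans  :: "('s \<times> 'a lbl \<times> 's) set"
  init   :: 's

inductive enc_step :: "('a, 'x) fm \<Rightarrow> ('a, 'x) fm \<Rightarrow> 'a lbl \<Rightarrow> ('a, 'x) fm \<Rightarrow> bool"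
  for \<phi> where
  "enc_step \<phi> (Var X) LOr (bnd \<phi> X)"
| "enc_step \<phi> (Neg p) LNeg p"
| "enc_step \<phi> (Dia a p) (LDia a) p"
| "enc_step \<phi> (Or p q) LOr p"
| "enc_step \<phi> (Or p q) LOr q"
| "enc_step \<phi> (Mu (X, k) p) (LMu k) p"

definition enc_trans :: "('a, 'x) fm \<Rightarrow> (('a, 'x) fm \<times> 'a lbl \<times> ('a, 'x) fm) set" where
  "enc_trans \<phi> = {(s, l, t). s \<in> subs \<phi> \<and> enc_step \<phi> s l t}"

definition enc :: "('a, 'x) fm \<Rightarrow> (('a, 'x) fm, 'a) lts" where
  "enc \<phi> = \<lparr> states = subs \<phi>,
             labels = {l. \<exists>s t. (s, l, t) \<in> enc_trans \<phi>},
             trans = enc_trans \<phi>,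
             init = \<phi> \<rparr>"

fun bigor :: "('a, 'x) fm list \<Rightarrow> ('a, 'x) fm" where
  "bigor [] = FF"
| "bigor [p] = p"
| "bigor (p # ps) = Or p (bigor ps)"

text \<open>Decoding, as a relation: dec_s P br s E \<psi> says that \<psi> is the
  result of dec_s(P,s,E) for some enumeration order of the outgoing transitions
  (and the recursion terminates). br s k is the variable [s]^k.\<close>
inductive dec_s :: "('s, 'a) lts \<Rightarrow> ('s \<Rightarrow> nat \<Rightarrow> 'x pvar) \<Rightarrow> 's \<Rightarrow> 's set
                     \<Rightarrow> ('a, 'x) fm \<Rightarrow> bool"
  and dec_t :: "('s, 'a) lts \<Rightarrow> ('s \<Rightarrow> nat \<Rightarrow> 'x pvar) \<Rightarrow> ('s \<times> 'a lbl \<times> 's) \<Rightarrow> 's set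
                     \<Rightarrow> ('a, 'x) fm \<Rightarrow> bool"
  for P br where
  dec_s_intro: "\<lbrakk> distinct ts; set ts = {t \<in> trans P. fst t = s};
                  list_all2 (\<lambda>t \<psi>. dec_t P br t E \<psi>) ts \<psi>s \<rbrakk>
                \<Longrightarrow> dec_s P br s E (bigor \<psi>s)"
| dec_t_or: "dec_s P br s' E \<psi> \<Longrightarrow> dec_t P br (s, LOr, s') E \<psi>"
| dec_t_neg: "dec_s P br s' E \<psi> \<Longrightarrow> dec_t P br (s, LNeg, s') E (Neg \<psi>)"
| dec_t_dia: "dec_s P br s' E \<psi> \<Longrightarrow> dec_t P br (s, LDia a, s') E (Dia a \<psi>)"
| dec_t_mu_in: "s \<in> E \<Longrightarrow> dec_t P br (s, LMu k, s') E (Var (br s k))"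
| dec_t_mu_out: "\<lbrakk> s \<notin> E; dec_s P br s' (insert s E) \<psi> \<rbrakk>
                \<Longrightarrow> dec_t P br (s, LMu k, s') E (Mu (br s k) \<psi>)"

inductive eqf :: "('x pvar \<Rightarrow> 'x pvar) \<Rightarrow> ('a, 'x) fm \<Rightarrow> ('a, 'x) fm \<Rightarrow> bool"
  for f where
  "eqf f FF FF"
| "eqf f p p' \<Longrightarrow> eqf f (Neg p) (Neg p')"
| "eqf f p p' \<Longrightarrow> eqf f (Dia a p) (Dia a p')"
| "eqf f p1 p1' \<Longrightarrow> eqf f p2 p2' \<Longrightarrow> eqf f (Or p1 p2) (Or p1' p2')"
| "eqf f (Var X) (Var (f X))"
| "eqf f p p' \<Longrightarrow> eqf f (Mu X p) (Mu (f X) p')"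
| "eqf f p1 p1' \<Longrightarrow> eqf f p2 p2' \<Longrightarrow> eqf f (Or p1 p2) (Or p2' p1')"
| "eqf f p p' \<Longrightarrow> eqf f (Or p p) p'"
| "eqf f p p' \<Longrightarrow> eqf f p (Or p' p')"

end

theory Submission imports Defs begin

text \<open>Each state of \<open>enc \<phi>\<close> has the outgoing transitions dictated by its
  top connective, so decoding it rebuilds that connective around the decodings of its
  children; only an \<open>\<or>\<close>-node with two distinct children has two transitions, whose
  enumeration order is absorbed by commutativity, and one with equal children has a single
  transition, absorbed by idempotence. A binder \<open>\<mu>X\<^sup>k.\<psi>\<^sub>0\<close> is a state outside \<open>E\<close> and is
  decoded as \<open>\<mu>[\<phi>[X\<^sup>k]]\<^sup>k\<close>, i.e. \<open>\<mu>f(X\<^sup>k)\<close>, after which it is added to \<open>E\<close>; a variable \<open>X\<^sup>k\<close>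
  steps to \<open>\<phi>[X\<^sup>k]\<close>, which by then lies in \<open>E\<close> and is decoded as the variable \<open>f(X\<^sup>k)\<close>.\<close>

lemma subs_refl [simp]: "p \<in> subs p"
  by (cases p) auto

lemma subs_trans: "q \<in> subs p \<Longrightarrow> r \<in> subs q \<Longrightarrow> r \<in> subs p"
  by (induction p) auto

lemma bv_eq_set_binders: "bv p = set (binders p)"
  by (induction p) auto

lemma fv_subs_subset: "q \<in> subs p \<Longrightarrow> fv q \<subseteq> fv p \<union> bv p"
  by (induction p) auto

lemma bv_subs_subset: "q \<in> subs p \<Longrightarrow> bv q \<subseteq> bv p"
  by (induction p) auto

lemma distinct_binders_subs: "q \<in> subs p \<Longrightarrow> distinct (binders p) \<Longrightarrow> distinct (binders q)"
  by (induction p) auto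

lemma Mu_subs_imp_binder: "Mu X r \<in> subs p \<Longrightarrow> X \<in> set (binders p)"
  by (induction p) auto

lemma Mu_subs_unique:
  "distinct (binders p) \<Longrightarrow> Mu X r \<in> subs p \<Longrightarrow> Mu X r' \<in> subs p \<Longrightarrow> r = r'"
  by (induction p) (use Mu_subs_imp_binder in fastforce)+

lemma bv_imp_Mu_subs: "X \<in> bv p \<Longrightarrow> \<exists>r. Mu X r \<in> subs p"
  by (induction p) auto

lemma bnd_eqI: "distinct (binders p) \<Longrightarrow> Mu X r \<in> subs p \<Longrightarrow> bnd p X = Mu X r"
  unfolding bnd_def by (rule the_equality) (auto dest: Mu_subs_unique)

lemma bnd_bv:
  assumes "distinct (binders p)" and "X \<in> bv p"
  obtains r where "Mu X r \<in> subs p" and "bnd p X = Mu X r"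
  using bv_imp_Mu_subs[OF assms(2)] bnd_eqI[OF assms(1)] by blast

lemma bnd_inj_on_bv: "distinct (binders p) \<Longrightarrow> inj_on (bnd p) (bv p)"
  by (rule inj_onI) (metis bnd_bv fm.inject(3))

inductive_cases dec_sE: "dec_s P br s E \<psi>"
inductive_cases dec_t_LOrE: "dec_t P br (s, LOr, s') E \<psi>"
inductive_cases dec_t_LNegE: "dec_t P br (s, LNeg, s') E \<psi>"
inductive_cases dec_t_LDiaE: "dec_t P br (s, LDia a, s') E \<psi>"
inductive_cases dec_t_LMuE: "dec_t P br (s, LMu k, s') E \<psi>"

lemma dec_t_LOr_iff: "dec_t P br (s, LOr, s') E \<psi> \<longleftrightarrow> dec_s P br s' E \<psi>"
  by (auto elim: dec_t_LOrE intro: dec_t_or)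

lemma dec_t_LNeg_iff: "dec_t P br (s, LNeg, s') E \<psi> \<longleftrightarrow> (\<exists>\<psi>\<^sub>0. \<psi> = Neg \<psi>\<^sub>0 \<and> dec_s P br s' E \<psi>\<^sub>0)"
  by (auto elim: dec_t_LNegE intro: dec_t_neg)

lemma dec_t_LDia_iff:
  "dec_t P br (s, LDia a, s') E \<psi> \<longleftrightarrow> (\<exists>\<psi>\<^sub>0. \<psi> = Dia a \<psi>\<^sub>0 \<and> dec_s P br s' E \<psi>\<^sub>0)"
  by (auto elim: dec_t_LDiaE intro: dec_t_dia)

lemma dec_t_LMu_iff:
  "dec_t P br (s, LMu k, s') E \<psi> \<longleftrightarrow>
     (if s \<in> E then \<psi> = Var (br s k)
      else \<exists>\<psi>\<^sub>0. \<psi> = Mu (br s k) \<psi>\<^sub>0 \<and> dec_s P br s' (insert s E) \<psi>\<^sub>0)"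
  by (auto elim: dec_t_LMuE intro: dec_t_mu_in dec_t_mu_out)

lemma dec_s_no_trans_iff:
  assumes out: "{t \<in> trans P. fst t = s} = {}"
  shows "dec_s P br s E \<psi> \<longleftrightarrow> \<psi> = FF"
proof
  assume "dec_s P br s E \<psi>"
  then obtain ts \<psi>s where set_ts: "set ts = {t \<in> trans P. fst t = s}"
      and dec: "list_all2 (\<lambda>t \<psi>. dec_t P br t E \<psi>) ts \<psi>s" and \<psi>: "\<psi> = bigor \<psi>s"
    by (cases rule: dec_sE) auto
  from set_ts have "ts = []"
    unfolding out by simp
  with dec \<psi> show "\<psi> = FF" by simp
next
  have "dec_s P br s E (bigor [])"
    by (rule dec_s_intro[of "[]"]) (use out in simp_all)
  then show "\<psi> = FF \<Longrightarrow> dec_s P br s E \<psi>" by simp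
qed

lemma dec_s_single_trans_iff:
  assumes out: "{t \<in> trans P. fst t = s} = {t\<^sub>0}"
  shows "dec_s P br s E \<psi> \<longleftrightarrow> dec_t P br t\<^sub>0 E \<psi>"
proof
  assume "dec_s P br s E \<psi>"
  then obtain ts \<psi>s where "distinct ts" and set_ts: "set ts = {t \<in> trans P. fst t = s}"
      and dec: "list_all2 (\<lambda>t \<psi>. dec_t P br t E \<psi>) ts \<psi>s" and \<psi>: "\<psi> = bigor \<psi>s"
    by (cases rule: dec_sE) auto
  then have "length ts = 1"
    using out distinct_card by fastforce
  with set_ts out have "ts = [t\<^sub>0]"
    by (auto simp: length_Suc_conv)
  with dec \<psi> show "dec_t P br t\<^sub>0 E \<psi>"
    by (auto simp: list_all2_Cons1)
next
  assume "dec_t P br t\<^sub>0 E \<psi>"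
  then have "dec_s P br s E (bigor [\<psi>])"
    by (intro dec_s_intro[of "[t\<^sub>0]"]) (use out in auto)
  then show "dec_s P br s E \<psi>" by simp
qed

lemma dec_s_two_trans_iff:
  assumes out: "{t \<in> trans P. fst t = s} = {t\<^sub>1, t\<^sub>2}" and "t\<^sub>1 \<noteq> t\<^sub>2"
  shows "dec_s P br s E \<psi> \<longleftrightarrow>
     (\<exists>a b. dec_t P br t\<^sub>1 E a \<and> dec_t P br t\<^sub>2 E b \<and> (\<psi> = Or a b \<or> \<psi> = Or b a))"
proof
  assume "dec_s P br s E \<psi>"
  then obtain ts \<psi>s where "distinct ts" and set_ts: "set ts = {t \<in> trans P. fst t = s}"
      and dec: "list_all2 (\<lambda>t \<psi>. dec_t P br t E \<psi>) ts \<psi>s" and \<psi>: "\<psi> = bigor \<psi>s"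
    by (cases rule: dec_sE) auto
  have "length ts = 2"
    using distinct_card[OF \<open>distinct ts\<close>] set_ts out \<open>t\<^sub>1 \<noteq> t\<^sub>2\<close> by simp
  then obtain x y where "ts = [x, y]"
    by (auto simp: length_Suc_conv numeral_2_eq_2)
  with set_ts out \<open>distinct ts\<close> have "ts = [t\<^sub>1, t\<^sub>2] \<or> ts = [t\<^sub>2, t\<^sub>1]"
    by (auto simp: doubleton_eq_iff)
  with dec \<psi> show "\<exists>a b. dec_t P br t\<^sub>1 E a \<and> dec_t P br t\<^sub>2 E b \<and> (\<psi> = Or a b \<or> \<psi> = Or b a)"
    by (auto simp: list_all2_Cons1) blast+
next
  assume "\<exists>a b. dec_t P br t\<^sub>1 E a \<and> dec_t P br t\<^sub>2 E b \<and> (\<psi> = Or a b \<or> \<psi> = Or b a)"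
  then obtain a b where ab: "dec_t P br t\<^sub>1 E a" "dec_t P br t\<^sub>2 E b"
      and "\<psi> = Or a b \<or> \<psi> = Or b a"
    by blast
  moreover have "dec_s P br s E (bigor [a, b])"
    by (rule dec_s_intro[of "[t\<^sub>1, t\<^sub>2]"]) (use assms ab in simp_all)
  moreover have "dec_s P br s E (bigor [b, a])"
    by (rule dec_s_intro[of "[t\<^sub>2, t\<^sub>1]"]) (use assms ab in auto)
  ultimately show "dec_s P br s E \<psi>" by auto
qed

lemma enc_out_trans:
  "s \<in> subs \<phi> \<Longrightarrow> {t \<in> trans (enc \<phi>). fst t = s} = {(s', l, t). s' = s \<and> enc_step \<phi> s l t}"
  by (auto simp: enc_def enc_trans_def)

lemma dec_enc_FF: "FF \<in> subs \<phi> \<Longrightarrow> dec_s (enc \<phi>) br FF E \<psi> \<longleftrightarrow> \<psi> = FF"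
  by (rule dec_s_no_trans_iff) (auto simp: enc_out_trans enc_step.simps)

lemma dec_enc_Neg:
  "Neg p \<in> subs \<phi> \<Longrightarrow>
     dec_s (enc \<phi>) br (Neg p) E \<psi> \<longleftrightarrow> (\<exists>\<psi>\<^sub>0. \<psi> = Neg \<psi>\<^sub>0 \<and> dec_s (enc \<phi>) br p E \<psi>\<^sub>0)"
  by (subst dec_s_single_trans_iff[of _ _ "(Neg p, LNeg, p)"])
    (auto simp: enc_out_trans enc_step.simps dec_t_LNeg_iff)

lemma dec_enc_Dia:
  "Dia a p \<in> subs \<phi> \<Longrightarrow>
     dec_s (enc \<phi>) br (Dia a p) E \<psi> \<longleftrightarrow> (\<exists>\<psi>\<^sub>0. \<psi> = Dia a \<psi>\<^sub>0 \<and> dec_s (enc \<phi>) br p E \<psi>\<^sub>0)"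
  by (subst dec_s_single_trans_iff[of _ _ "(Dia a p, LDia a, p)"])
    (auto simp: enc_out_trans enc_step.simps dec_t_LDia_iff)

lemma dec_enc_Or_same:
  "Or p p \<in> subs \<phi> \<Longrightarrow> dec_s (enc \<phi>) br (Or p p) E \<psi> \<longleftrightarrow> dec_s (enc \<phi>) br p E \<psi>"
  by (subst dec_s_single_trans_iff[of _ _ "(Or p p, LOr, p)"])
    (auto simp: enc_out_trans enc_step.simps dec_t_LOr_iff)

lemma dec_enc_Or_distinct:
  "Or p q \<in> subs \<phi> \<Longrightarrow> p \<noteq> q \<Longrightarrow>
     dec_s (enc \<phi>) br (Or p q) E \<psi> \<longleftrightarrow>
       (\<exists>a b. dec_s (enc \<phi>) br p E a \<and> dec_s (enc \<phi>) br q E b \<and> (\<psi> = Or a b \<or> \<psi> = Or b a))"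
  by (subst dec_s_two_trans_iff[of _ _ "(Or p q, LOr, p)" "(Or p q, LOr, q)"])
    (auto simp: enc_out_trans enc_step.simps dec_t_LOr_iff)

lemma dec_enc_Mu:
  assumes "Mu X p \<in> subs \<phi>"
  shows "dec_s (enc \<phi>) br (Mu X p) E \<psi> \<longleftrightarrow>
       (if Mu X p \<in> E then \<psi> = Var (br (Mu X p) (snd X))
        else \<exists>\<psi>\<^sub>0. \<psi> = Mu (br (Mu X p) (snd X)) \<psi>\<^sub>0 \<and>
                   dec_s (enc \<phi>) br p (insert (Mu X p) E) \<psi>\<^sub>0)"
proof -
  obtain x k where X: "X = (x, k)" by fastforce
  show ?thesis
    by (subst dec_s_single_trans_iff[of _ _ "(Mu X p, LMu k, p)"])
      (use assms in \<open>auto simp: X enc_out_trans enc_step.simps dec_t_LMu_iff\<close>)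
qed

lemma dec_enc_Var:
  "Var X \<in> subs \<phi> \<Longrightarrow> dec_s (enc \<phi>) br (Var X) E \<psi> \<longleftrightarrow> dec_s (enc \<phi>) br (bnd \<phi> X) E \<psi>"
  by (subst dec_s_single_trans_iff[of _ _ "(Var X, LOr, bnd \<phi> X)"])
    (auto simp: enc_out_trans enc_step.simps dec_t_LOr_iff)

definition dec_ctx :: "('a, 'x) fm \<Rightarrow> ('a, 'x) fm \<Rightarrow> ('a, 'x) fm set \<Rightarrow> bool" where
  "dec_ctx \<phi> \<psi> E \<longleftrightarrow> bnd \<phi> ` fv \<psi> \<subseteq> E \<and> E \<inter> bnd \<phi> ` bv \<psi> = {}"

lemma dec_ctx_Or: "dec_ctx \<phi> (Or p q) E \<Longrightarrow> dec_ctx \<phi> p E \<and> dec_ctx \<phi> q E"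
  by (auto simp: dec_ctx_def)

lemma dec_ctx_Mu:
  assumes dist: "distinct (binders \<phi>)" and sub: "Mu X p \<in> subs \<phi>"
    and ctx: "dec_ctx \<phi> (Mu X p) E"
  shows "Mu X p \<notin> E" and "dec_ctx \<phi> p (insert (Mu X p) E)"
proof -
  have bnd_X: "bnd \<phi> X = Mu X p"
    using bnd_eqI[OF dist sub] .
  have X_bv: "X \<in> bv \<phi>" and bv_p: "bv p \<subseteq> bv \<phi>"
    using bv_subs_subset[OF sub] by auto
  have "X \<notin> bv p"
    using distinct_binders_subs[OF sub dist] by (simp add: bv_eq_set_binders)
  then have "Mu X p \<notin> bnd \<phi> ` bv p"
    using inj_on_image_mem_iff[OF bnd_inj_on_bv[OF dist] X_bv bv_p] bnd_X by simp
  with ctx bnd_X show "Mu X p \<notin> E" and "dec_ctx \<phi> p (insert (Mu X p) E)"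
    by (auto simp: dec_ctx_def)
qed

lemma dec_enc_eqf:
  assumes dist: "distinct (binders \<phi>)" and closed: "fv \<phi> = {}"
    and f_bv: "\<And>X. X \<in> bv \<phi> \<Longrightarrow> f X = br (bnd \<phi> X) (snd X)"
    and "\<psi> \<in> subs \<phi>" and "dec_ctx \<phi> \<psi> E"
  shows "(\<exists>\<psi>'. dec_s (enc \<phi>) br \<psi> E \<psi>') \<and> (\<forall>\<psi>'. dec_s (enc \<phi>) br \<psi> E \<psi>' \<longrightarrow> eqf f \<psi> \<psi>')"
  using assms(4,5)
proof (induction \<psi> arbitrary: E)
  case FF
  then show ?case by (simp add: dec_enc_FF eqf.intros)
next
  case (Or p q)
  have IH: "(\<exists>\<psi>'. dec_s (enc \<phi>) br r E \<psi>') \<and> (\<forall>\<psi>'. dec_s (enc \<phi>) br r E \<psi>' \<longrightarrow> eqf f r \<psi>')"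
    if "r = p \<or> r = q" for r
    using that Or.IH dec_ctx_Or[OF Or.prems(2)] subs_trans[OF Or.prems(1)] by auto
  show ?case
  proof (cases "p = q")
    case True
    with Or.prems(1) IH show ?thesis
      by (auto simp: dec_enc_Or_same intro: eqf.intros)
  next
    case False
    with IH[of p] IH[of q] show ?thesis
      unfolding dec_enc_Or_distinct[OF Or.prems(1) False] by (blast intro: eqf.intros)
  qed
next
  case (Dia a p)
  with subs_trans[OF Dia.prems(1)] show ?case
    by (auto simp: dec_enc_Dia dec_ctx_def intro: eqf.intros)
next
  case (Neg p)
  with subs_trans[OF Neg.prems(1)] show ?case
    by (auto simp: dec_enc_Neg dec_ctx_def intro: eqf.intros)
next
  case (Mu X p)
  have "X \<in> bv \<phi>"
    using bv_subs_subset[OF Mu.prems(1)] by auto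
  then have f_X: "f X = br (Mu X p) (snd X)"
    using f_bv bnd_eqI[OF dist Mu.prems(1)] by simp
  have dec_Mu: "dec_s (enc \<phi>) br (Mu X p) E \<psi>' \<longleftrightarrow>
      (\<exists>\<psi>\<^sub>0. \<psi>' = Mu (f X) \<psi>\<^sub>0 \<and> dec_s (enc \<phi>) br p (insert (Mu X p) E) \<psi>\<^sub>0)" for \<psi>'
    unfolding dec_enc_Mu[OF Mu.prems(1)] using dec_ctx_Mu(1)[OF dist Mu.prems] f_X by simp
  have "(\<exists>\<psi>'. dec_s (enc \<phi>) br p (insert (Mu X p) E) \<psi>') \<and>
      (\<forall>\<psi>'. dec_s (enc \<phi>) br p (insert (Mu X p) E) \<psi>' \<longrightarrow> eqf f p \<psi>')"
    using Mu.IH subs_trans[OF Mu.prems(1)] dec_ctx_Mu(2)[OF dist Mu.prems] by simp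
  then show ?case
    unfolding dec_Mu by (auto intro: eqf.intros)
next
  case (Var X)
  have "X \<in> bv \<phi>"
    using fv_subs_subset[OF Var.prems(1)] closed by auto
  then obtain r where r: "Mu X r \<in> subs \<phi>" and bnd_X: "bnd \<phi> X = Mu X r"
    using bnd_bv[OF dist] by blast
  have "Mu X r \<in> E"
    using Var.prems(2) bnd_X by (simp add: dec_ctx_def)
  moreover have "f X = br (Mu X r) (snd X)"
    using f_bv[OF \<open>X \<in> bv \<phi>\<close>] bnd_X by simp
  ultimately have "dec_s (enc \<phi>) br (Var X) E \<psi>' \<longleftrightarrow> \<psi>' = Var (f X)" for \<psi>'
    unfolding dec_enc_Var[OF Var.prems(1)] bnd_X dec_enc_Mu[OF r] by simp
  then show ?case
    by (auto intro: eqf.intros)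
qed

theorem lemma1:
  fixes \<phi> :: "('a, 'x) fm"
    and f :: "'x pvar \<Rightarrow> 'x pvar"
    and br :: "('a, 'x) fm \<Rightarrow> nat \<Rightarrow> 'x pvar"
  assumes br_inj: "inj (\<lambda>(s, k). br s k)"
    and br_block: "\<And>s k. snd (br s k) = k"
    and closed: "closed \<phi>"
    and distinct: "distinct_bv \<phi>"
    and f_bij: "bij f"
    and f_bv: "\<And>X. X \<in> bv \<phi> \<Longrightarrow> f X = br (bnd \<phi> X) (snd X)"
  shows "\<forall>\<psi> \<in> subs \<phi>. \<forall>E. E \<subseteq> states (enc \<phi>)
           \<longrightarrow> bnd \<phi> ` fv \<psi> \<subseteq> E
           \<longrightarrow> E \<inter> bnd \<phi> ` bv \<psi> = {}
           \<longrightarrow> (\<exists>\<psi>'. dec_s (enc \<phi>) br \<psi> E \<psi>')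
               \<and> (\<forall>\<psi>'. dec_s (enc \<phi>) br \<psi> E \<psi>' \<longrightarrow> eqf f \<psi> \<psi>')"
  using dec_enc_eqf[of \<phi> f br] f_bv closed distinct
  by (simp add: closed_def distinct_bv_def dec_ctx_def)

end
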